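(* Let $\mu$ be a compactly supported positive Borel measure on $\mathbb{C}$ with infinite support, and let $\mathbf{D}$ be its associated Hessenberg matrix. Then $$\operatorname{Co}(\operatorname{supp}(\mu))=\overline{\{v\mathbf{D}v^*: v\in c_{00},\ vv^*=1\}}=\overline{\bigcup_{n=0}^\infty W(\mathbf{D}_n)},$$ where $\mathbf{D}_n$ is the $(n+1)\times(n+1)$ leading section of $\mathbf{D}$.
   Context: Let $(\varphi_n)_{n\ge0}$ be the orthonormal polynomials in $L^2(\mu)$ obtained by Gram–Schmidt from $1,z,z^2,\dots$ ($\deg\varphi_n=n$). The Hessenberg matrix of $\mu$ is the infinite matrix $\mathbf{D}=(d_{i,j})_{i,j\ge0}$, $d_{i,j}=\int z\varphi_j(z)\overline{\varphi_i(z)}\,d\mu$, i.e. the matrix of the operator of multiplication by $z$ on $P^2(\mu)$ (the closure of the polynomials in $L^2(\mu)$) in the orthonormal basis $(\varphi_n)$. $c_{00}$ is the space of finitely supported complex row sequences. For a finite square matrix $\mathbf{A}$ of size $k$, $W(\mathbf{A})=\{v\mathbf{A}v^*: v\in\mathbb{C}^k, vv^*=1\}$. $\operatorname{Co}$ denotes convex hull. *)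

theory Defs
  imports "HOL-Analysis.Analysis"
begin

definition msupp :: "complex measure \<Rightarrow> complex set" where
  "msupp M = {z. \<forall>e>0. emeasure M (ball z e) \<noteq> 0}"

definition l2ip :: "complex measure \<Rightarrow> (complex \<Rightarrow> complex) \<Rightarrow> (complex \<Rightarrow> complex) \<Rightarrow> complex" where
  "l2ip M f g = (\<integral>z. f z * cnj (g z) \<partial>M)"

definition l2normalize :: "complex measure \<Rightarrow> (complex \<Rightarrow> complex) \<Rightarrow> (complex \<Rightarrow> complex)" where
  "l2normalize M u = (\<lambda>z. u z / complex_of_real (sqrt (Re (l2ip M u u))))"

fun gs_list :: "complex measure \<Rightarrow> nat \<Rightarrow> (complex \<Rightarrow> complex) list" where
  "gs_list M 0 = [l2normalize M (\<lambda>z. 1)]"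
| "gs_list M (Suc n) =
     (let ps = gs_list M n;
          u = (\<lambda>z. z ^ Suc n - (\<Sum>p\<leftarrow>ps. l2ip M (\<lambda>w. w ^ Suc n) p * p z))
      in ps @ [l2normalize M u])"

definition orthpoly :: "complex measure \<Rightarrow> nat \<Rightarrow> complex \<Rightarrow> complex" where
  "orthpoly M n = gs_list M n ! n"

definition hessenberg :: "complex measure \<Rightarrow> nat \<Rightarrow> nat \<Rightarrow> complex" where
  "hessenberg M i j = l2ip M (\<lambda>z. z * orthpoly M j z) (orthpoly M i)"

definition hess_numrange :: "complex measure \<Rightarrow> complex set" where
  "hess_numrange M =
     {\<Sum>i\<in>S. \<Sum>j\<in>S. v i * hessenberg M i j * cnj (v j) | v S.
        finite S \<and> (\<forall>i. i \<notin> S \<longrightarrow> v i = 0) \<and> (\<Sum>i\<in>S. (cmod (v i))^2) = 1}"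

definition section_numrange :: "complex measure \<Rightarrow> nat \<Rightarrow> complex set" where
  "section_numrange M n =
     {\<Sum>i\<le>n. \<Sum>j\<le>n. v i * hessenberg M i j * cnj (v j) | v.
        (\<Sum>i\<le>n. (cmod (v i))^2) = 1}"

end

(*
  Expanding a polynomial p = \<Sum> c_j \<phi>_j in the orthonormal basis turns v D v^* (with v = conj c)
  into the Rayleigh quotient <z p, p> / <p, p> = \<integral> z |p|^2 d\<mu> / \<integral> |p|^2 d\<mu>.  So the
  numerical range of D, and equally the union of the W(D_n), is the set R of Rayleigh quotients
  of nonzero polynomials.  Each of them is the barycentre of the probability measure
  |p|^2 d\<mu> / \<integral> |p|^2 d\<mu> on supp \<mu>, hence lies in the convex hull of the support.
  Conversely, R is convex: along the pencil (1 - s) p1 + s \<omega> p2, for a unimodular \<omega> making a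
  cross term real, the Rayleigh quotient moves continuously on the line through its endpoints.
  And R meets every open half-plane Re (conj a * z) < b that meets supp \<mu> in some z0: the powers
  of p(z) = 1 - \<epsilon> conj a (z - z0) concentrate |p^N|^2 d\<mu> in that half-plane.  A point of the
  convex hull outside the closure of R could be separated from R by such a half-plane.
*)

theory Submission
  imports Defs "HOL-Computational_Algebra.Polynomial"
begin

lemma l2ip_cnj_commute: "l2ip M f g = cnj (l2ip M g f)"
proof -
  have "cnj (\<integral>z. g z * cnj (f z) \<partial>M) = (\<integral>z. cnj (g z * cnj (f z)) \<partial>M)"
    by (rule Bochner_Integration.integral_cnj[symmetric])
  then show ?thesis
    unfolding l2ip_def by (simp add: mult.commute)
qed

lemma l2ip_self: "l2ip M f f = of_real (\<integral>z. (cmod (f z))\<^sup>2 \<partial>M)"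
proof -
  have "(\<lambda>z. f z * cnj (f z)) = (\<lambda>z. complex_of_real ((cmod (f z))\<^sup>2))"
    by (rule ext) (metis complex_norm_square)
  then show ?thesis
    unfolding l2ip_def by (simp only: integral_complex_of_real)
qed

lemma l2ip_self_real: "l2ip M f f = of_real (Re (l2ip M f f))"
  by (simp add: l2ip_self)

lemma l2ip_scale_left: "l2ip M (\<lambda>z. a * f z) g = a * l2ip M f g"
  unfolding l2ip_def by (simp add: mult.assoc)

lemma l2ip_scale_right: "l2ip M f (\<lambda>z. a * g z) = cnj a * l2ip M f g"
  unfolding l2ip_def by (simp add: mult_ac)

definition rayleigh :: "complex measure \<Rightarrow> (complex \<Rightarrow> complex) \<Rightarrow> complex" where
  "rayleigh M f = l2ip M (\<lambda>z. z * f z) f / l2ip M f f"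

definition rayleigh_range :: "complex measure \<Rightarrow> complex set" where
  "rayleigh_range M = {rayleigh M (poly q) | q. q \<noteq> 0}"

lemma rayleigh_scale: "c \<noteq> 0 \<Longrightarrow> rayleigh M (\<lambda>z. c * f z) = rayleigh M f"
  unfolding rayleigh_def
  by (simp add: mult.left_commute[of _ c] l2ip_scale_left l2ip_scale_right)

lemma smult_add_nonzero_if_rayleigh_ne:
  assumes "q1 \<noteq> 0" "q2 \<noteq> 0" "rayleigh M (poly q1) \<noteq> rayleigh M (poly q2)" "a \<noteq> 0 \<or> b \<noteq> 0"
  shows "smult a q1 + smult b q2 \<noteq> 0"
proof
  assume sum0: "smult a q1 + smult b q2 = 0"
  have "b \<noteq> 0"
    using sum0 assms(1,4) by auto
  define c where "c = - a / b"
  have "q2 = smult c q1"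
    using sum0 \<open>b \<noteq> 0\<close> unfolding c_def
    by (metis add_eq_0_iff smult_minus_left smult_smult nonzero_mult_div_cancel_left divide_inverse mult.commute smult_1_left)
  moreover have "c \<noteq> 0"
    using assms(2) \<open>q2 = smult c q1\<close> by auto
  ultimately have "rayleigh M (poly q2) = rayleigh M (poly q1)"
    using rayleigh_scale[of c M "poly q1"] by (simp add: poly_smult[abs_def])
  with assms(3) show False
    by simp
qed

definition gs_residual :: "complex measure \<Rightarrow> nat \<Rightarrow> complex \<Rightarrow> complex" where
  "gs_residual M n z = z ^ n - (\<Sum>k<n. l2ip M (\<lambda>w. w ^ n) (orthpoly M k) * orthpoly M k z)"

lemma length_gs_list: "length (gs_list M n) = Suc n"
  by (induction n) (simp_all add: Let_def)

lemma gs_list_eq_map: "gs_list M n = map (orthpoly M) [0..<Suc n]"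
proof (induction n)
  case 0
  then show ?case
    by (simp add: orthpoly_def)
next
  case (Suc n)
  define p where "p = l2normalize M (\<lambda>z. z ^ Suc n - (\<Sum>p\<leftarrow>gs_list M n. l2ip M (\<lambda>w. w ^ Suc n) p * p z))"
  have snoc: "gs_list M (Suc n) = gs_list M n @ [p]"
    by (simp add: Let_def p_def)
  then have "orthpoly M (Suc n) = p"
    unfolding orthpoly_def using length_gs_list[of M n] by (simp add: nth_append)
  then show ?case
    using snoc Suc by simp
qed

lemma orthpoly_eq_normalize: "orthpoly M n = l2normalize M (gs_residual M n)"
proof (cases n)
  case 0
  then show ?thesis
    by (simp add: orthpoly_def gs_residual_def[abs_def])
next
  case (Suc m)
  have "(\<Sum>p\<leftarrow>gs_list M m. l2ip M (\<lambda>w. w ^ Suc m) p * p z) =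
      (\<Sum>k<Suc m. l2ip M (\<lambda>w. w ^ Suc m) (orthpoly M k) * orthpoly M k z)" for z
    unfolding gs_list_eq_map by (simp add: sum_list_distinct_conv_sum_set atLeast0LessThan)
  moreover have "orthpoly M (Suc m) = l2normalize M (\<lambda>z. z ^ Suc m -
      (\<Sum>p\<leftarrow>gs_list M m. l2ip M (\<lambda>w. w ^ Suc m) p * p z))"
    unfolding orthpoly_def using length_gs_list[of M m] by (simp add: Let_def nth_append)
  ultimately show ?thesis
    using Suc by (simp add: gs_residual_def[abs_def])
qed

lemma gs_residual_monic:
  assumes "\<forall>k<n. \<exists>q. orthpoly M k = poly q \<and> degree q \<le> k"
  shows "\<exists>U. gs_residual M n = poly U \<and> degree U \<le> n \<and> coeff U n = 1"
proof -
  obtain Q where Q: "\<And>k. k < n \<Longrightarrow> orthpoly M k = poly (Q k) \<and> degree (Q k) \<le> k"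
    using assms by metis
  define c where "c k = l2ip M (\<lambda>w. w ^ n) (orthpoly M k)" for k
  define U where "U = monom 1 n - (\<Sum>k<n. smult (c k) (Q k))"
  have "gs_residual M n = poly U"
    unfolding U_def gs_residual_def[abs_def] c_def by (auto simp: poly_monom poly_sum Q intro!: sum.cong)
  moreover have "degree U \<le> n"
  proof -
    have "degree (smult (c k) (Q k)) \<le> n" if "k < n" for k
      using Q[OF that] that degree_smult_le[of "c k" "Q k"] by linarith
    then show ?thesis
      unfolding U_def by (intro degree_diff_le degree_monom_le degree_sum_le) auto
  qed
  moreover have "coeff U n = 1"
  proof -
    have "coeff (Q k) n = 0" if "k < n" for k
      using Q[OF that] that by (intro coeff_eq_0) auto
    then show ?thesis
      by (simp add: U_def coeff_sum)
  qed
  ultimately show ?thesis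
    by blast
qed

lemma Union_section_numrange: "(\<Union>n. section_numrange M n) = hess_numrange M"
proof (intro equalityI subsetI)
  fix x assume "x \<in> (\<Union>n. section_numrange M n)"
  then obtain n v where x: "x = (\<Sum>i\<le>n. \<Sum>j\<le>n. v i * hessenberg M i j * cnj (v j))"
    and v: "(\<Sum>i\<le>n. (cmod (v i))\<^sup>2) = 1"
    unfolding section_numrange_def by blast
  define w where "w i = (if i \<le> n then v i else 0)" for i
  have "x = (\<Sum>i\<le>n. \<Sum>j\<le>n. w i * hessenberg M i j * cnj (w j))" "(\<Sum>i\<le>n. (cmod (w i))\<^sup>2) = 1"
    using x v by (simp_all add: w_def)
  moreover have "\<forall>i. i \<notin> {..n} \<longrightarrow> w i = 0"
    by (simp add: w_def)
  ultimately show "x \<in> hess_numrange M"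
    unfolding hess_numrange_def by blast
next
  fix x assume "x \<in> hess_numrange M"
  then obtain v S where x: "x = (\<Sum>i\<in>S. \<Sum>j\<in>S. v i * hessenberg M i j * cnj (v j))"
    and S: "finite S" "\<forall>i. i \<notin> S \<longrightarrow> v i = 0" "(\<Sum>i\<in>S. (cmod (v i))\<^sup>2) = 1"
    unfolding hess_numrange_def by blast
  define n where "n = Max S"
  have sub: "S \<subseteq> {..n}"
    unfolding n_def using S(1) by auto
  have "(\<Sum>i\<in>S. (cmod (v i))\<^sup>2) = (\<Sum>i\<le>n. (cmod (v i))\<^sup>2)"
    "\<And>i. (\<Sum>j\<in>S. v i * hessenberg M i j * cnj (v j)) = (\<Sum>j\<le>n. v i * hessenberg M i j * cnj (v j))"
    "(\<Sum>i\<in>S. \<Sum>j\<le>n. v i * hessenberg M i j * cnj (v j)) = (\<Sum>i\<le>n. \<Sum>j\<le>n. v i * hessenberg M i j * cnj (v j))"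
    by (intro sum.mono_neutral_left; use sub S in auto)+
  then have "x \<in> section_numrange M n"
    unfolding section_numrange_def x using S(3) by auto
  then show "x \<in> (\<Union>n. section_numrange M n)"
    by blast
qed

lemma exists_unimodular_real_combination: "\<exists>\<omega>. \<omega> * cnj \<omega> = 1 \<and> cnj \<omega> * \<beta> + \<omega> * \<gamma> \<in> \<real>"
proof -
  define \<eta> where "\<eta> = \<gamma> - cnj \<beta>"
  obtain \<omega> where \<omega>: "\<omega> * cnj \<omega> = 1" "\<omega> * \<eta> \<in> \<real>"
  proof (cases "\<eta> = 0")
    case False
    have sq: "cnj \<eta> * \<eta> = of_real ((cmod \<eta>)\<^sup>2)"
      unfolding complex_norm_square by (rule mult.commute)
    show ?thesis
    proof
      show "cnj \<eta> / of_real (cmod \<eta>) * cnj (cnj \<eta> / of_real (cmod \<eta>)) = 1"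
        using False sq by (simp add: mult.commute power2_eq_square)
      show "cnj \<eta> / of_real (cmod \<eta>) * \<eta> \<in> \<real>"
        using False sq by (simp add: power2_eq_square)
    qed
  qed (use that[of 1] in simp)
  have "cnj \<omega> * \<beta> + \<omega> * \<gamma> = \<omega> * \<eta> + (\<omega> * cnj \<beta> + cnj (\<omega> * cnj \<beta>))"
    by (simp add: \<eta>_def algebra_simps)
  moreover have "\<omega> * cnj \<beta> + cnj (\<omega> * cnj \<beta>) \<in> \<real>"
    by (simp add: Reals_cnj_iff)
  ultimately have "cnj \<omega> * \<beta> + \<omega> * \<gamma> \<in> \<real>"
    using \<omega>(2) by (metis Reals_add)
  with \<omega>(1) show ?thesis
    by blast
qed

lemma closed_segment_subset_path_image:
  fixes F :: "real \<Rightarrow> complex"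
  assumes "continuous_on {0..1} F" "F 0 = x" "F 1 = y"
    and "\<And>s. s \<in> {0..1} \<Longrightarrow> (F s - x) / (y - x) \<in> \<real>"
  shows "closed_segment x y \<subseteq> F ` {0..1}"
proof (cases "x = y")
  case True
  then show ?thesis
    using assms(2) by force
next
  case False
  define h where "h s = Re ((F s - x) / (y - x))" for s
  have "continuous_on {0..1} h"
    unfolding h_def using False by (intro continuous_intros assms(1)) auto
  moreover have "h 0 = 0" "h 1 = 1"
    using False assms(2,3) by (simp_all add: h_def)
  ultimately have ivt: "\<exists>s\<in>{0..1}. h s = t" if "t \<in> {0..1}" for t
    using IVT'[of h 0 t 1] that by auto
  have line: "F s = x + of_real (h s) * (y - x)" if "s \<in> {0..1}" for s
    using assms(4)[OF that] False unfolding h_def by (auto simp: field_simps elim!: Reals_cases)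
  show ?thesis
  proof
    fix u assume "u \<in> closed_segment x y"
    then obtain t where t: "t \<in> {0..1}" "u = (1 - t) *\<^sub>R x + t *\<^sub>R y"
      unfolding closed_segment_def by auto
    then obtain s where s: "s \<in> {0..1}" "h s = t"
      using ivt by blast
    have "u = x + of_real t * (y - x)"
      using t(2) by (simp add: scaleR_conv_of_real algebra_simps)
    then have "u = F s"
      using line[OF s(1)] s(2) by simp
    with s(1) show "u \<in> F ` {0..1}"
      by blast
  qed
qed

lemma norm_one_minus_cnj_mult_sq:
  "(cmod (1 - of_real e * (cnj a * v)))\<^sup>2 = 1 - 2 * e * inner a v + e\<^sup>2 * (cmod a * cmod v)\<^sup>2"
proof -
  have "(cmod (1 - of_real e * t))\<^sup>2 = 1 - 2 * e * Re t + e\<^sup>2 * (cmod t)\<^sup>2" for t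
    by (simp only: cmod_power2) (simp add: power2_eq_square algebra_simps)
  moreover have "Re (cnj a * v) = inner a v"
    by (simp add: inner_complex_def)
  ultimately show ?thesis
    by (simp add: norm_mult)
qed

locale compactly_supported_measure =
  fixes M :: "complex measure"
  assumes sets_M: "sets M = sets borel"
    and finite_M: "finite_measure M"
    and compact_msupp: "compact (msupp M)"
begin

lemma space_M [simp]: "space M = UNIV"
  using sets_eq_imp_space_eq[OF sets_M] by simp

lemma sets_M_open: "open U \<Longrightarrow> U \<in> sets M"
  using sets_M by simp

lemma AE_in_msupp: "AE z in M. z \<in> msupp M"
proof -
  \<comment> \<open>By Lindelof, the complement of the support is a countable union of null balls.\<close>
  define F where "F = {ball z e | z e. e > 0 \<and> emeasure M (ball z e) = 0}"
  obtain F' where F': "F' \<subseteq> F" "countable F'" "\<Union>F' = \<Union>F"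
    using Lindelof[of F] unfolding F_def by auto
  have "(\<Union>B\<in>F'. B) \<in> null_sets M"
    by (rule null_sets_UN'[OF F'(2)]) (use F'(1) sets_M_open in \<open>auto simp: F_def\<close>)
  moreover have "{z \<in> space M. z \<notin> msupp M} \<subseteq> \<Union>F'"
    unfolding F'(3) by (force simp: msupp_def F_def)
  ultimately show ?thesis
    by (intro AE_I') auto
qed

lemma integrable_continuous:
  fixes f :: "complex \<Rightarrow> 'b::{banach,second_countable_topology}"
  assumes "continuous_on UNIV f"
  shows "integrable M f"
proof -
  have "compact (f ` msupp M)"
    by (rule compact_continuous_image[OF continuous_on_subset[OF assms] compact_msupp]) simp
  then obtain B where B: "\<forall>y\<in>f ` msupp M. norm y \<le> B"
    using compact_imp_bounded bounded_iff by metis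
  have "AE z in M. norm (f z) \<le> B"
    using AE_in_msupp by eventually_elim (use B in auto)
  moreover have "f \<in> borel_measurable M"
    using measurable_cong_sets[OF sets_M refl] borel_measurable_continuous_onI[OF assms] by blast
  ultimately show ?thesis
    using finite_measure.integrable_const_bound[OF finite_M] by blast
qed

lemma measure_ball_pos: "z \<in> msupp M \<Longrightarrow> e > 0 \<Longrightarrow> measure M (ball z e) > 0"
  unfolding msupp_def finite_measure.emeasure_eq_measure[OF finite_M]
  using measure_nonneg[of M] by (simp add: order_less_le)

lemma integral_indicator_ball: "(\<integral>z. c * indicator (ball z0 r) z \<partial>M) = c * measure M (ball z0 r)"
  using sets_M_open[of "ball z0 r"] by simp

lemma integrable_indicator_ball: "integrable M (\<lambda>z. c * indicator (ball z0 r) z :: real)"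
  using sets_M_open[of "ball z0 r"] finite_measure.emeasure_eq_measure[OF finite_M]
  by (intro integrable_mult_right) simp

lemma integral_pos_if_pos_at_msupp:
  fixes f :: "complex \<Rightarrow> real"
  assumes cont: "continuous_on UNIV f" and nonneg: "\<And>z. 0 \<le> f z"
    and z1: "z1 \<in> msupp M" and pos: "0 < f z1"
  shows "0 < integral\<^sup>L M f"
proof -
  define c where "c = f z1 / 2"
  have "c > 0"
    using pos by (simp add: c_def)
  have "continuous (at z1) f"
    using cont by (simp add: continuous_on_eq_continuous_at)
  then obtain r where "r > 0" and r: "\<And>z. dist z z1 < r \<Longrightarrow> dist (f z) (f z1) < c"
    using \<open>c > 0\<close> unfolding continuous_at_eps_delta by blast
  have "(\<integral>z. c * indicator (ball z1 r) z \<partial>M) \<le> integral\<^sup>L M f"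
  proof (rule integral_mono[OF integrable_indicator_ball integrable_continuous[OF cont]])
    fix z
    show "c * indicator (ball z1 r) z \<le> f z"
    proof (cases "z \<in> ball z1 r")
      case True
      then have "\<bar>f z - f z1\<bar> < c"
        using r by (simp add: dist_commute dist_real_def)
      then have "c \<le> f z"
        unfolding c_def by linarith
      then show ?thesis
        using True by simp
    qed (simp add: nonneg)
  qed
  moreover have "0 < c * measure M (ball z1 r)"
    using \<open>c > 0\<close> measure_ball_pos[OF z1 \<open>r > 0\<close>] by simp
  ultimately show ?thesis
    by (simp add: integral_indicator_ball)
qed

lemma l2ip_lincomb_left:
  assumes "continuous_on UNIV f" "continuous_on UNIV g" "continuous_on UNIV h"
  shows "l2ip M (\<lambda>z. a * f z + b * g z) h = a * l2ip M f h + b * l2ip M g h"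
proof -
  have "integrable M (\<lambda>z. f z * cnj (h z))" "integrable M (\<lambda>z. g z * cnj (h z))"
    by (intro integrable_continuous continuous_intros assms)+
  moreover have "(\<lambda>z. (a * f z + b * g z) * cnj (h z)) =
      (\<lambda>z. a * (f z * cnj (h z)) + b * (g z * cnj (h z)))"
    by (auto simp: algebra_simps)
  ultimately show ?thesis
    unfolding l2ip_def by simp
qed

lemma l2ip_lincomb_right:
  assumes "continuous_on UNIV f" "continuous_on UNIV g" "continuous_on UNIV h"
  shows "l2ip M h (\<lambda>z. a * f z + b * g z) = cnj a * l2ip M h f + cnj b * l2ip M h g"
  using l2ip_lincomb_left[OF assms, where a=a and b=b] l2ip_cnj_commute[of M h]
  by (metis complex_cnj_add complex_cnj_mult)

lemma l2ip_sum_left: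
  assumes "finite S" "\<And>j. j \<in> S \<Longrightarrow> continuous_on UNIV (f j)" "continuous_on UNIV h"
  shows "l2ip M (\<lambda>z. \<Sum>j\<in>S. a j * f j z) h = (\<Sum>j\<in>S. a j * l2ip M (f j) h)"
proof -
  have "\<And>j. j \<in> S \<Longrightarrow> integrable M (\<lambda>z. a j * (f j z * cnj (h z)))"
    by (intro integrable_continuous continuous_intros assms) auto
  moreover have "(\<lambda>z. (\<Sum>j\<in>S. a j * f j z) * cnj (h z)) = (\<lambda>z. \<Sum>j\<in>S. a j * (f j z * cnj (h z)))"
    by (simp add: sum_distrib_right mult.assoc)
  ultimately show ?thesis
    unfolding l2ip_def by (simp add: integral_sum)
qed

lemma l2ip_sum_right:
  assumes "finite S" "\<And>j. j \<in> S \<Longrightarrow> continuous_on UNIV (f j)" "continuous_on UNIV h"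
  shows "l2ip M h (\<lambda>z. \<Sum>j\<in>S. a j * f j z) = (\<Sum>j\<in>S. cnj (a j) * l2ip M h (f j))"
proof -
  have "l2ip M h (\<lambda>z. \<Sum>j\<in>S. a j * f j z) = cnj (\<Sum>j\<in>S. a j * l2ip M (f j) h)"
    using l2ip_sum_left[OF assms, where a=a] l2ip_cnj_commute[of M h] by simp
  then show ?thesis
    by (simp add: l2ip_cnj_commute[of M h])
qed

lemma l2ip_pencil:
  assumes "continuous_on UNIV f" "continuous_on UNIV g" "continuous_on UNIV h" "continuous_on UNIV k"
  shows "l2ip M (\<lambda>z. A * f z + B * g z) (\<lambda>z. A * h z + B * k z) =
    A * cnj A * l2ip M f h + A * cnj B * l2ip M f k + B * cnj A * l2ip M g h + B * cnj B * l2ip M g k"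
  using assms by (simp add: l2ip_lincomb_left l2ip_lincomb_right continuous_intros algebra_simps)

lemma continuous_on_rayleigh_pencil:
  assumes "continuous_on UNIV p1" "continuous_on UNIV p2" "continuous_on S A" "continuous_on S B"
    and "\<And>s. s \<in> S \<Longrightarrow> l2ip M (\<lambda>z. A s * p1 z + B s * p2 z) (\<lambda>z. A s * p1 z + B s * p2 z) \<noteq> 0"
  shows "continuous_on S (\<lambda>s. rayleigh M (\<lambda>z. A s * p1 z + B s * p2 z))"
proof -
  have "(\<lambda>z. z * (A s * p1 z + B s * p2 z)) = (\<lambda>z. A s * (z * p1 z) + B s * (z * p2 z))" for s
    by (simp add: algebra_simps)
  then have "rayleigh M (\<lambda>z. A s * p1 z + B s * p2 z) =
    (A s * cnj (A s) * l2ip M (\<lambda>z. z * p1 z) p1 + A s * cnj (B s) * l2ip M (\<lambda>z. z * p1 z) p2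
      + B s * cnj (A s) * l2ip M (\<lambda>z. z * p2 z) p1 + B s * cnj (B s) * l2ip M (\<lambda>z. z * p2 z) p2) /
    (A s * cnj (A s) * l2ip M p1 p1 + A s * cnj (B s) * l2ip M p1 p2
      + B s * cnj (A s) * l2ip M p2 p1 + B s * cnj (B s) * l2ip M p2 p2)" for s
    unfolding rayleigh_def using assms(1,2) by (simp add: l2ip_pencil continuous_intros)
  moreover have "continuous_on S (\<lambda>s. \<dots> s)"
    using assms(5) unfolding l2ip_pencil[OF assms(1,2,1,2)]
    by (intro continuous_intros assms(3,4)) auto
  ultimately show ?thesis
    by simp
qed

lemma rayleigh_pencil_on_line:
  assumes p: "continuous_on UNIV p1" "continuous_on UNIV p2"
    and N: "l2ip M p1 p1 \<noteq> 0" "l2ip M p2 p2 \<noteq> 0" and "rayleigh M p1 \<noteq> rayleigh M p2"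
  obtains \<omega> where "\<omega> * cnj \<omega> = 1"
    "\<And>s. l2ip M (\<lambda>z. of_real (1 - s) * p1 z + (of_real s * \<omega>) * p2 z)
        (\<lambda>z. of_real (1 - s) * p1 z + (of_real s * \<omega>) * p2 z) \<noteq> 0 \<Longrightarrow>
      (rayleigh M (\<lambda>z. of_real (1 - s) * p1 z + (of_real s * \<omega>) * p2 z) - rayleigh M p1) /
      (rayleigh M p2 - rayleigh M p1) \<in> \<real>"
proof -
  define x1 where "x1 = rayleigh M p1"
  define d where "d = rayleigh M p2 - x1"
  have "d \<noteq> 0"
    using assms(5) by (simp add: d_def x1_def)
  \<comment> \<open>\<open>(rayleigh M f - x1) / d = b f f / l2ip M f f\<close>, and \<open>\<omega>\<close> makes the cross term of \<open>b\<close> along the pencil real.\<close>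
  define b where "b f g = (l2ip M (\<lambda>z. z * f z) g - x1 * l2ip M f g) / d" for f g
  have b11: "b p1 p1 = 0" and b22: "b p2 p2 = l2ip M p2 p2"
    using N \<open>d \<noteq> 0\<close> by (simp_all add: b_def x1_def d_def rayleigh_def field_simps)
  obtain \<omega> where \<omega>: "\<omega> * cnj \<omega> = 1" "cnj \<omega> * b p1 p2 + \<omega> * b p2 p1 \<in> \<real>"
    using exists_unimodular_real_combination by blast
  have "(rayleigh M f - x1) / d \<in> \<real>" if "f = (\<lambda>z. of_real (1 - s) * p1 z + (of_real s * \<omega>) * p2 z)"
    and nz: "l2ip M f f \<noteq> 0" for s f
  proof -
    define A where "A = complex_of_real (1 - s)"
    define B where "B = complex_of_real s * \<omega>"
    have f: "f = (\<lambda>z. A * p1 z + B * p2 z)"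
      unfolding that(1) A_def B_def ..
    have zf: "(\<lambda>z. z * f z) = (\<lambda>z. A * (z * p1 z) + B * (z * p2 z))"
      unfolding f by (simp add: algebra_simps)
    have "l2ip M (\<lambda>z. z * f z) f = A * cnj A * l2ip M (\<lambda>z. z * p1 z) p1 + A * cnj B * l2ip M (\<lambda>z. z * p1 z) p2
        + B * cnj A * l2ip M (\<lambda>z. z * p2 z) p1 + B * cnj B * l2ip M (\<lambda>z. z * p2 z) p2"
      unfolding zf unfolding f by (rule l2ip_pencil) (intro continuous_intros p)+
    moreover have "l2ip M f f = A * cnj A * l2ip M p1 p1 + A * cnj B * l2ip M p1 p2
        + B * cnj A * l2ip M p2 p1 + B * cnj B * l2ip M p2 p2"
      unfolding f by (rule l2ip_pencil[OF p p])
    ultimately have "b f f = A * cnj A * b p1 p1 + A * cnj B * b p1 p2 + B * cnj A * b p2 p1 + B * cnj B * b p2 p2"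
      unfolding b_def using \<open>d \<noteq> 0\<close> by (simp add: field_simps)
    also have "\<dots> = of_real ((1 - s) * s) * (cnj \<omega> * b p1 p2 + \<omega> * b p2 p1) + of_real (s\<^sup>2) * l2ip M p2 p2"
      using \<omega>(1) by (simp add: A_def B_def b11 b22 algebra_simps power2_eq_square)
    finally have "b f f \<in> \<real>"
      using \<omega>(2) l2ip_self_real[of M p2] by (metis Reals_add Reals_mult Reals_of_real)
    moreover have "(rayleigh M f - x1) / d = b f f / l2ip M f f"
      using nz by (simp add: b_def rayleigh_def field_simps)
    ultimately show ?thesis
      using l2ip_self_real[of M f] by (metis Reals_divide Reals_of_real)
  qed
  with \<omega>(1) show ?thesis
    using that unfolding x1_def d_def by blast
qed

lemma gs_residual_orthogonal:
  assumes cont: "\<And>k. k < n \<Longrightarrow> continuous_on UNIV (orthpoly M k)"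
    and orth: "\<And>j k. j < n \<Longrightarrow> k < n \<Longrightarrow> l2ip M (orthpoly M j) (orthpoly M k) = (if j = k then 1 else 0)"
    and "k < n"
  shows "l2ip M (gs_residual M n) (orthpoly M k) = 0"
proof -
  define c where "c j = l2ip M (\<lambda>w. w ^ n) (orthpoly M j)" for j
  have res: "gs_residual M n = (\<lambda>z. 1 * z ^ n + (-1) * (\<Sum>j<n. c j * orthpoly M j z))"
    unfolding gs_residual_def[abs_def] c_def by simp
  have "l2ip M (gs_residual M n) (orthpoly M k) =
      c k - l2ip M (\<lambda>z. \<Sum>j<n. c j * orthpoly M j z) (orthpoly M k)"
    unfolding res c_def using cont \<open>k < n\<close>
    by (subst l2ip_lincomb_left) (auto intro!: continuous_intros)
  also have "l2ip M (\<lambda>z. \<Sum>j<n. c j * orthpoly M j z) (orthpoly M k) = (\<Sum>j<n. c j * l2ip M (orthpoly M j) (orthpoly M k))"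
    using cont \<open>k < n\<close> by (intro l2ip_sum_left) auto
  also have "\<dots> = c k"
    using \<open>k < n\<close> by (simp add: orth if_distrib cong: if_cong)
  finally show ?thesis
    by simp
qed

lemma inner_rayleigh_diff:
  assumes "continuous_on UNIV f" and pos: "0 < (\<integral>z. (cmod (f z))\<^sup>2 \<partial>M)"
  shows "inner a (rayleigh M f) - b = (\<integral>z. (inner a z - b) * (cmod (f z))\<^sup>2 \<partial>M) / (\<integral>z. (cmod (f z))\<^sup>2 \<partial>M)"
proof -
  define n where "n = (\<integral>z. (cmod (f z))\<^sup>2 \<partial>M)"
  have int_n: "integrable M (\<lambda>z. (cmod (f z))\<^sup>2)" and int_g: "integrable M (\<lambda>z. inner a z * (cmod (f z))\<^sup>2)"
    by (intro integrable_continuous continuous_intros assms)+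
  have "(\<lambda>z. z * f z * cnj (f z)) = (\<lambda>z. (cmod (f z))\<^sup>2 *\<^sub>R z)"
    by (rule ext) (metis complex_norm_square mult.assoc mult.commute scaleR_conv_of_real)
  then have "l2ip M (\<lambda>z. z * f z) f = (\<integral>z. (cmod (f z))\<^sup>2 *\<^sub>R z \<partial>M)"
    unfolding l2ip_def by simp
  moreover have "inner a (\<integral>z. (cmod (f z))\<^sup>2 *\<^sub>R z \<partial>M) = (\<integral>z. inner a z * (cmod (f z))\<^sup>2 \<partial>M)"
    using integral_inner_right[where c=a and M=M and f="\<lambda>z. (cmod (f z))\<^sup>2 *\<^sub>R z"]
    by (simp add: integrable_continuous continuous_intros assms mult.commute)
  moreover have "rayleigh M f = (1 / n) *\<^sub>R l2ip M (\<lambda>z. z * f z) f"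
    unfolding rayleigh_def l2ip_self n_def scaleR_conv_of_real by (simp add: divide_inverse_commute)
  ultimately have "inner a (rayleigh M f) = (\<integral>z. inner a z * (cmod (f z))\<^sup>2 \<partial>M) / n"
    by simp
  moreover have "(\<integral>z. (inner a z - b) * (cmod (f z))\<^sup>2 \<partial>M) = (\<integral>z. inner a z * (cmod (f z))\<^sup>2 \<partial>M) - b * n"
    using int_n int_g unfolding n_def by (simp add: left_diff_distrib)
  ultimately show ?thesis
    using pos unfolding n_def[symmetric] by (simp add: field_simps)
qed

lemma exists_power_weighted_integral_neg:
  fixes h w :: "complex \<Rightarrow> real"
  assumes cont: "continuous_on UNIV h" "continuous_on UNIV w"
    and z0: "z0 \<in> msupp M" and "0 < r" "0 < c" "0 < U" "U < L"
    and near: "\<And>z. z \<in> ball z0 r \<Longrightarrow> h z \<le> - c \<and> L \<le> w z"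
    and nonneg: "\<And>z. z \<in> msupp M \<Longrightarrow> 0 \<le> w z"
    and far: "\<And>z. z \<in> msupp M \<Longrightarrow> 0 \<le> h z \<Longrightarrow> w z \<le> U"
  shows "\<exists>N. (\<integral>z. h z * w z ^ N \<partial>M) < 0"
proof -
  have "bounded (h ` msupp M)"
    by (intro compact_imp_bounded compact_continuous_image continuous_on_subset[OF cont(1)] compact_msupp) simp
  then obtain G where G: "0 < G" "\<And>z. z \<in> msupp M \<Longrightarrow> h z \<le> G"
    unfolding bounded_pos by (auto dest: abs_le_D1)
  define \<mu>A where "\<mu>A = measure M (ball z0 r)"
  define \<mu>T where "\<mu>T = measure M UNIV"
  have "0 < \<mu>A" "0 \<le> \<mu>T"
    unfolding \<mu>A_def \<mu>T_def using measure_ball_pos[OF z0 \<open>0 < r\<close>] by simp_all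
  obtain N where N: "(U / L) ^ N < c * \<mu>A / (G * \<mu>T + 1)"
    using real_arch_pow_inv[of "c * \<mu>A / (G * \<mu>T + 1)" "U / L"] \<open>0 < \<mu>A\<close> \<open>0 \<le> \<mu>T\<close> G(1)
      \<open>0 < c\<close> \<open>0 < U\<close> \<open>U < L\<close> by (auto simp: add_nonneg_pos)
  have "L > 0"
    using \<open>0 < U\<close> \<open>U < L\<close> by simp
  have bound: "AE z in M. h z * w z ^ N \<le> - c * L ^ N * indicator (ball z0 r) z + G * U ^ N"
    using AE_in_msupp
  proof eventually_elim
    case (elim z)
    have GU: "0 \<le> G * U ^ N"
      using G(1) \<open>0 < U\<close> by simp
    show ?case
    proof (cases "z \<in> ball z0 r")
      case True
      then have "h z * w z ^ N \<le> - c * w z ^ N"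
        using near[OF True] nonneg[OF elim] by (intro mult_right_mono) auto
      also have "\<dots> \<le> - c * L ^ N"
        using near[OF True] \<open>0 < c\<close> \<open>L > 0\<close> by (simp add: power_mono)
      finally show ?thesis
        using True GU by simp
    next
      case False
      have "h z * w z ^ N \<le> G * U ^ N"
      proof (cases "0 \<le> h z")
        case True
        then show ?thesis
          using G(2)[OF elim] nonneg[OF elim] far[OF elim True]
          by (intro mult_mono power_mono) auto
      next
        case False
        then show ?thesis
          using GU nonneg[OF elim] by (smt (verit) mult_nonpos_nonneg zero_le_power)
      qed
      then show ?thesis
        using False by simp
    qed
  qed
  have "(\<integral>z. h z * w z ^ N \<partial>M) \<le> (\<integral>z. - c * L ^ N * indicator (ball z0 r) z + G * U ^ N \<partial>M)"
    using bound
    by (intro integral_mono_AE integrable_continuous continuous_intros cont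
        Bochner_Integration.integrable_add integrable_indicator_ball finite_measure.integrable_const[OF finite_M])
  also have "\<dots> = - c * L ^ N * \<mu>A + G * U ^ N * \<mu>T"
    unfolding \<mu>A_def \<mu>T_def
    by (subst Bochner_Integration.integral_add[OF integrable_indicator_ball finite_measure.integrable_const[OF finite_M]])
      (simp add: integral_indicator_ball)
  also have "\<dots> < 0"
  proof -
    have GT: "0 < G * \<mu>T + 1"
      using G(1) \<open>0 \<le> \<mu>T\<close> by (simp add: add_nonneg_pos)
    have "G * \<mu>T * (U / L) ^ N \<le> (G * \<mu>T + 1) * (U / L) ^ N"
      using \<open>0 < U\<close> \<open>L > 0\<close> by (intro mult_right_mono) auto
    also have "\<dots> < (G * \<mu>T + 1) * (c * \<mu>A / (G * \<mu>T + 1))"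
      using GT N by (rule mult_strict_left_mono[rotated])
    also have "\<dots> = c * \<mu>A"
      using GT by simp
    finally have "G * \<mu>T * (U / L) ^ N < c * \<mu>A" .
    then have "G * \<mu>T * (U / L) ^ N * L ^ N < c * \<mu>A * L ^ N"
      using \<open>L > 0\<close> by simp
    then show ?thesis
      using \<open>L > 0\<close> by (simp add: power_divide mult_ac)
  qed
  finally show ?thesis
    by blast
qed


lemma exists_linear_poly_peaking:
  assumes "inner a z0 < b"
  obtains r U L and p :: "complex poly" where "0 < r" "0 < U" "U < L"
    "\<And>z. z \<in> ball z0 r \<Longrightarrow> inner a z - b \<le> - ((b - inner a z0) / 2) \<and> L \<le> (cmod (poly p z))\<^sup>2"
    "\<And>z. z \<in> msupp M \<Longrightarrow> 0 \<le> inner a z - b \<Longrightarrow> (cmod (poly p z))\<^sup>2 \<le> U"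
proof -
  define \<delta> where "\<delta> = b - inner a z0"
  have "\<delta> > 0"
    using assms by (simp add: \<delta>_def)
  obtain D where D: "\<And>z. z \<in> msupp M \<Longrightarrow> cmod (z - z0) \<le> D"
    using compact_imp_bounded[OF compact_msupp] bounded_any_center[of _ z0]
    by (metis dist_norm dist_commute)
  define X where "X = (cmod a * D)\<^sup>2 + \<delta>\<^sup>2"
  have "X > 0"
    using \<open>\<delta> > 0\<close> by (simp add: X_def add_nonneg_pos)
  \<comment> \<open>Small enough that the quadratic term \<open>\<epsilon>\<^sup>2 |a|\<^sup>2 |z - z0|\<^sup>2\<close> of \<open>|p z|\<^sup>2\<close> stays below \<open>\<epsilon> \<delta> / 2\<close> on the support.\<close>
  define \<epsilon> where "\<epsilon> = \<delta> / (2 * X)"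
  have "\<epsilon> > 0" "\<epsilon> * X = \<delta> / 2"
    using \<open>\<delta> > 0\<close> \<open>X > 0\<close> by (simp_all add: \<epsilon>_def)
  then have \<epsilon>D: "\<epsilon> * (cmod a * D)\<^sup>2 \<le> \<delta> / 2" and "\<epsilon> * \<delta>\<^sup>2 \<le> \<delta> / 2"
    by (metis X_def le_add_same_cancel1 le_add_same_cancel2 mult_left_mono less_imp_le zero_le_power2)+
  then have \<epsilon>\<delta>: "\<epsilon> * \<delta> \<le> 1 / 2"
    using \<open>\<delta> > 0\<close> by (simp add: power2_eq_square field_simps)
  define r where "r = \<delta> / (2 * (cmod a + 1))"
  define L where "L = 1 - \<epsilon> * \<delta>"
  define U where "U = 1 - 3 / 2 * (\<epsilon> * \<delta>)"
  define p where "p = [:1 + of_real \<epsilon> * cnj a * z0, - of_real \<epsilon> * cnj a:]"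
  define w where "w z = (cmod (poly p z))\<^sup>2" for z
  have w: "w z = 1 - 2 * \<epsilon> * (inner a z - inner a z0) + \<epsilon>\<^sup>2 * (cmod a * cmod (z - z0))\<^sup>2" for z
  proof -
    have "poly p z = 1 - of_real \<epsilon> * (cnj a * (z - z0))"
      by (simp add: p_def algebra_simps)
    then show ?thesis
      unfolding w_def by (simp only: norm_one_minus_cnj_mult_sq inner_diff_right)
  qed
  have near: "inner a z - b \<le> - (\<delta> / 2) \<and> L \<le> w z" if "z \<in> ball z0 r" for z
  proof -
    have "inner a z - inner a z0 \<le> cmod a * cmod (z - z0)"
      using norm_cauchy_schwarz[of a "z - z0"] by (simp add: inner_diff_right)
    also have "\<dots> \<le> cmod a * r"
      using that by (intro mult_left_mono) (auto simp: dist_norm norm_minus_commute)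
    also have "\<dots> = \<delta> / 2 * (cmod a / (cmod a + 1))"
      by (simp add: r_def field_simps)
    also have "\<dots> < \<delta> / 2 * 1"
      using \<open>\<delta> > 0\<close> by (intro mult_strict_left_mono) (auto simp: add_nonneg_pos)
    finally have "inner a z - inner a z0 < \<delta> / 2"
      by simp
    then have "2 * \<epsilon> * (inner a z - inner a z0) \<le> \<epsilon> * \<delta>"
      using mult_left_mono[of "2 * (inner a z - inner a z0)" \<delta> \<epsilon>] \<open>\<epsilon> > 0\<close> by (simp add: mult_ac)
    moreover have "0 \<le> \<epsilon>\<^sup>2 * (cmod a * cmod (z - z0))\<^sup>2"
      by simp
    ultimately show ?thesis
      using \<open>inner a z - inner a z0 < \<delta> / 2\<close> unfolding w L_def \<delta>_def by (intro conjI) (simp add: field_simps, linarith)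
  qed
  have far: "w z \<le> U" if "z \<in> msupp M" "0 \<le> inner a z - b" for z
  proof -
    have "(cmod a * cmod (z - z0))\<^sup>2 \<le> (cmod a * D)\<^sup>2"
      using D[OF that(1)] by (intro power_mono mult_left_mono) auto
    then have "\<epsilon>\<^sup>2 * (cmod a * cmod (z - z0))\<^sup>2 \<le> \<epsilon>\<^sup>2 * (cmod a * D)\<^sup>2"
      by (intro mult_left_mono) auto
    also have "\<dots> = \<epsilon> * (\<epsilon> * (cmod a * D)\<^sup>2)"
      by (simp add: power2_eq_square)
    also have "\<dots> \<le> \<epsilon> * (\<delta> / 2)"
      using \<epsilon>D \<open>\<epsilon> > 0\<close> by (intro mult_left_mono) auto
    finally have "\<epsilon>\<^sup>2 * (cmod a * cmod (z - z0))\<^sup>2 \<le> \<epsilon> * (\<delta> / 2)" .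
    moreover have "\<epsilon> * \<delta> \<le> \<epsilon> * (inner a z - inner a z0)"
      using that(2) \<open>\<epsilon> > 0\<close> by (intro mult_left_mono) (auto simp: \<delta>_def)
    ultimately show ?thesis
      unfolding w U_def by linarith
  qed
  show ?thesis
    by (rule that[of r U L p]) (use near far \<open>\<delta> > 0\<close> \<open>\<epsilon> > 0\<close> \<epsilon>\<delta> in \<open>auto simp: r_def U_def L_def w_def \<delta>_def add_nonneg_pos\<close>)
qed

end

locale infinitely_supported_measure = compactly_supported_measure +
  assumes infinite_msupp: "infinite (msupp M)"
begin

lemma norm_poly_pos:
  assumes "q \<noteq> 0"
  shows "0 < (\<integral>z. (cmod (poly q z))\<^sup>2 \<partial>M)"
proof -
  obtain z1 where "z1 \<in> msupp M" "poly q z1 \<noteq> 0"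
    using infinite_msupp poly_roots_finite[OF assms] by (metis (mono_tags) finite_subset mem_Collect_eq subsetI)
  then show ?thesis
    by (intro integral_pos_if_pos_at_msupp continuous_intros) auto
qed

lemma orthpoly_poly_orthonormal:
  "(\<exists>q. orthpoly M n = poly q \<and> degree q \<le> n) \<and> (\<forall>k<n. l2ip M (orthpoly M n) (orthpoly M k) = 0)
    \<and> l2ip M (orthpoly M n) (orthpoly M n) = 1"
proof (induction n rule: less_induct)
  case (less n)
  have orth: "l2ip M (orthpoly M j) (orthpoly M k) = (if j = k then 1 else 0)" if "j < n" "k < n" for j k
  proof (cases j k rule: linorder_cases)
    case less
    then show ?thesis
      using less.IH[OF that(2)] l2ip_cnj_commute[of M "orthpoly M j"] by simp
  qed (use less.IH[OF that(1)] in simp_all)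
  have cont: "continuous_on UNIV (orthpoly M k)" if "k < n" for k
    using less.IH[OF that] by (auto intro!: continuous_intros)
  obtain U where U: "gs_residual M n = poly U" "degree U \<le> n" "coeff U n = 1"
    using gs_residual_monic[of n M] less.IH by blast
  define s where "s = sqrt (Re (l2ip M (gs_residual M n) (gs_residual M n)))"
  have "U \<noteq> 0"
    using U(3) by auto
  then have s: "s > 0"
    unfolding s_def U(1) l2ip_self using norm_poly_pos by simp
  have phi: "orthpoly M n = (\<lambda>z. inverse (of_real s) * gs_residual M n z)"
    unfolding orthpoly_eq_normalize l2normalize_def s_def by (simp add: field_simps)
  have "\<exists>q. orthpoly M n = poly q \<and> degree q \<le> n"
    using U phi by (intro exI[of _ "smult (inverse (of_real s)) U"]) auto
  moreover have "\<forall>k<n. l2ip M (orthpoly M n) (orthpoly M k) = 0"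
    using gs_residual_orthogonal[OF cont orth] unfolding phi l2ip_scale_left by simp
  moreover have "l2ip M (orthpoly M n) (orthpoly M n) = 1"
  proof -
    have "s\<^sup>2 = Re (l2ip M (gs_residual M n) (gs_residual M n))"
      unfolding s_def by (simp add: l2ip_self)
    then have "l2ip M (gs_residual M n) (gs_residual M n) = of_real (s\<^sup>2)"
      using l2ip_self_real by metis
    then show ?thesis
      unfolding phi l2ip_scale_left l2ip_scale_right using s by (simp add: field_simps power2_eq_square)
  qed
  ultimately show ?case
    by blast
qed

lemma orthpoly_is_poly: "\<exists>q. orthpoly M n = poly q \<and> degree q \<le> n"
  using orthpoly_poly_orthonormal by blast

lemma continuous_on_orthpoly [continuous_intros]: "continuous_on UNIV (orthpoly M n)"
  using orthpoly_is_poly[of n] by (auto intro!: continuous_intros)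

lemma orthpoly_orthonormal: "l2ip M (orthpoly M j) (orthpoly M k) = (if j = k then 1 else 0)"
proof (cases j k rule: linorder_cases)
  case less
  then show ?thesis
    using orthpoly_poly_orthonormal[of k] l2ip_cnj_commute[of M "orthpoly M j"] by simp
qed (use orthpoly_poly_orthonormal[of j] in simp_all)

lemma gs_residual_norm_pos: "0 < Re (l2ip M (gs_residual M n) (gs_residual M n))"
proof -
  obtain U where U: "gs_residual M n = poly U" "coeff U n = 1"
    using gs_residual_monic[of n M] orthpoly_is_poly by blast
  then have "U \<noteq> 0"
    by auto
  then show ?thesis
    unfolding U(1) l2ip_self using norm_poly_pos by simp
qed

lemma monomial_in_orthpoly_span:
  assumes "n \<le> N"
  shows "\<exists>c. \<forall>z. z ^ n = (\<Sum>k\<le>N. c k * orthpoly M k z)"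
proof -
  define s where "s = sqrt (Re (l2ip M (gs_residual M n) (gs_residual M n)))"
  have s: "s > 0"
    unfolding s_def using gs_residual_norm_pos by simp
  have phi: "orthpoly M n z = gs_residual M n z / of_real s" for z
    unfolding orthpoly_eq_normalize l2normalize_def s_def ..
  define c where "c k = (if k = n then of_real s else if k < n then l2ip M (\<lambda>w. w ^ n) (orthpoly M k) else 0)" for k
  have "z ^ n = (\<Sum>k\<le>N. c k * orthpoly M k z)" for z
  proof -
    have "(\<Sum>k\<le>N. c k * orthpoly M k z) = (\<Sum>k\<le>n. c k * orthpoly M k z)"
      using assms by (intro sum.mono_neutral_right) (auto simp: c_def)
    also have "\<dots> = (\<Sum>k<n. c k * orthpoly M k z) + c n * orthpoly M n z"
      by (simp add: lessThan_Suc_atMost[symmetric])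
    also have "\<dots> = z ^ n"
      using s by (simp add: c_def phi gs_residual_def)
    finally show ?thesis ..
  qed
  then show ?thesis
    by blast
qed

lemma poly_in_orthpoly_span: "\<exists>d. \<forall>z. poly q z = (\<Sum>j\<le>degree q. d j * orthpoly M j z)"
proof -
  define N where "N = degree q"
  obtain C where C: "\<And>i z. i \<le> N \<Longrightarrow> z ^ i = (\<Sum>k\<le>N. C i k * orthpoly M k z)"
    using monomial_in_orthpoly_span[of _ N] by metis
  have "\<forall>z. poly q z = (\<Sum>k\<le>N. (\<Sum>i\<le>N. coeff q i * C i k) * orthpoly M k z)"
  proof
    fix z
    have "poly q z = (\<Sum>i\<le>N. coeff q i * (\<Sum>k\<le>N. C i k * orthpoly M k z))"
      unfolding N_def poly_altdef by (intro sum.cong) (auto simp: C N_def)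
    also have "\<dots> = (\<Sum>k\<le>N. \<Sum>i\<le>N. coeff q i * C i k * orthpoly M k z)"
      by (subst sum.swap) (simp add: sum_distrib_left mult.assoc)
    finally show "poly q z = (\<Sum>k\<le>N. (\<Sum>i\<le>N. coeff q i * C i k) * orthpoly M k z)"
      by (simp add: sum_distrib_right)
  qed
  then show ?thesis
    unfolding N_def by (rule exI[where x="\<lambda>k. \<Sum>i\<le>degree q. coeff q i * C i k"])
qed

lemma l2ip_orthpoly_combination:
  assumes "finite S"
  shows "l2ip M (\<lambda>z. \<Sum>j\<in>S. c j * orthpoly M j z) (\<lambda>z. \<Sum>j\<in>S. c j * orthpoly M j z)
     = of_real (\<Sum>j\<in>S. (cmod (c j))\<^sup>2)"
proof -
  have "l2ip M (\<lambda>z. \<Sum>j\<in>S. c j * orthpoly M j z) (\<lambda>z. \<Sum>j\<in>S. c j * orthpoly M j z)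
     = (\<Sum>j\<in>S. c j * (\<Sum>i\<in>S. cnj (c i) * l2ip M (orthpoly M j) (orthpoly M i)))"
    using assms by (simp add: l2ip_sum_left l2ip_sum_right continuous_intros)
  also have "\<dots> = (\<Sum>j\<in>S. c j * cnj (c j))"
    using assms by (simp add: orthpoly_orthonormal if_distrib cong: if_cong)
  also have "\<dots> = of_real (\<Sum>j\<in>S. (cmod (c j))\<^sup>2)"
    by (simp only: of_real_sum complex_norm_square)
  finally show ?thesis .
qed

lemma l2ip_shift_orthpoly_combination:
  assumes "finite S"
  shows "l2ip M (\<lambda>z. z * (\<Sum>j\<in>S. c j * orthpoly M j z)) (\<lambda>z. \<Sum>j\<in>S. c j * orthpoly M j z)
     = (\<Sum>i\<in>S. \<Sum>j\<in>S. cnj (c i) * hessenberg M i j * c j)"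
proof -
  have "(\<lambda>z. z * (\<Sum>j\<in>S. c j * orthpoly M j z)) = (\<lambda>z. \<Sum>j\<in>S. c j * (z * orthpoly M j z))"
    by (simp add: sum_distrib_left mult_ac)
  then have "l2ip M (\<lambda>z. z * (\<Sum>j\<in>S. c j * orthpoly M j z)) (\<lambda>z. \<Sum>j\<in>S. c j * orthpoly M j z)
     = (\<Sum>j\<in>S. c j * (\<Sum>i\<in>S. cnj (c i) * hessenberg M i j))"
    using assms unfolding hessenberg_def
    by (simp add: l2ip_sum_left[where f="\<lambda>j z. z * orthpoly M j z"] l2ip_sum_right continuous_intros)
  also have "\<dots> = (\<Sum>i\<in>S. \<Sum>j\<in>S. cnj (c i) * hessenberg M i j * c j)"
    by (subst sum.swap) (simp add: sum_distrib_left mult_ac)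
  finally show ?thesis .
qed

lemma hess_numrange_subset_rayleigh_range: "hess_numrange M \<subseteq> rayleigh_range M"
proof
  fix x assume "x \<in> hess_numrange M"
  then obtain v S where x: "x = (\<Sum>i\<in>S. \<Sum>j\<in>S. v i * hessenberg M i j * cnj (v j))"
    and S: "finite S" "(\<Sum>i\<in>S. (cmod (v i))\<^sup>2) = 1"
    unfolding hess_numrange_def by blast
  obtain P where P: "\<And>j. orthpoly M j = poly (P j)"
    using orthpoly_is_poly by metis
  define q where "q = (\<Sum>j\<in>S. smult (cnj (v j)) (P j))"
  have q: "poly q = (\<lambda>z. \<Sum>j\<in>S. cnj (v j) * orthpoly M j z)"
    unfolding q_def by (auto simp: poly_sum P)
  have norm: "l2ip M (poly q) (poly q) = 1"
    unfolding q l2ip_orthpoly_combination[OF S(1)] using S(2) by simp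
  then have "q \<noteq> 0"
    by (auto simp: l2ip_def)
  moreover have "x = rayleigh M (poly q)"
    unfolding rayleigh_def norm unfolding q l2ip_shift_orthpoly_combination[OF S(1)] x
    by (simp add: mult_ac)
  ultimately show "x \<in> rayleigh_range M"
    unfolding rayleigh_range_def by blast
qed

lemma rayleigh_range_subset_hess_numrange: "rayleigh_range M \<subseteq> hess_numrange M"
proof
  fix x assume "x \<in> rayleigh_range M"
  then obtain q where "q \<noteq> 0" and x: "x = rayleigh M (poly q)"
    unfolding rayleigh_range_def by blast
  obtain d where d: "\<And>z. poly q z = (\<Sum>j\<le>degree q. d j * orthpoly M j z)"
    using poly_in_orthpoly_span by blast
  define S where "S = {..degree q}"
  have q: "poly q = (\<lambda>z. \<Sum>j\<in>S. d j * orthpoly M j z)"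
    using d unfolding S_def by auto
  define n where "n = (\<Sum>j\<in>S. (cmod (d j))\<^sup>2)"
  define r where "r = sqrt n"
  have "l2ip M (poly q) (poly q) = of_real n"
    unfolding q n_def by (rule l2ip_orthpoly_combination) (simp add: S_def)
  then have "n = (\<integral>z. (cmod (poly q z))\<^sup>2 \<partial>M)"
    using l2ip_self[of M "poly q"] of_real_eq_iff by metis
  then have n: "n > 0"
    using norm_poly_pos[OF \<open>q \<noteq> 0\<close>] by simp
  then have r: "r > 0" "r\<^sup>2 = n"
    unfolding r_def by simp_all
  have norm: "l2ip M (poly q) (poly q) = of_real (r\<^sup>2)"
    using \<open>l2ip M (poly q) (poly q) = of_real n\<close> r(2) by simp
  define v where "v j = (if j \<in> S then cnj (d j) / of_real r else 0)" for j
  have "(\<Sum>i\<in>S. (cmod (v i))\<^sup>2) = (\<Sum>i\<in>S. (cmod (d i))\<^sup>2) / r\<^sup>2"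
    unfolding v_def by (simp add: norm_divide power_divide sum_divide_distrib)
  also have "\<dots> = 1"
    using r n unfolding n_def by simp
  finally have v_norm: "(\<Sum>i\<in>S. (cmod (v i))\<^sup>2) = 1" .
  have "x = (\<Sum>i\<in>S. \<Sum>j\<in>S. cnj (d i) * hessenberg M i j * d j) / of_real (r\<^sup>2)"
    unfolding x rayleigh_def norm unfolding q l2ip_shift_orthpoly_combination[OF finite_atMost[of "degree q", folded S_def]] ..
  also have "\<dots> = (\<Sum>i\<in>S. \<Sum>j\<in>S. v i * hessenberg M i j * cnj (v j))"
  proof -
    have "complex_of_real r * complex_of_real r = of_real n"
      using r(2) by (simp flip: of_real_mult add: power2_eq_square)
    then show ?thesis
      unfolding v_def using r by (simp add: sum_divide_distrib power2_eq_square field_simps cong: sum.cong)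
  qed
  finally have "x = (\<Sum>i\<in>S. \<Sum>j\<in>S. v i * hessenberg M i j * cnj (v j))" .
  moreover have "finite S" "\<forall>i. i \<notin> S \<longrightarrow> v i = 0"
    by (simp_all add: S_def v_def)
  ultimately show "x \<in> hess_numrange M"
    unfolding hess_numrange_def using v_norm by blast
qed

lemma rayleigh_range_subset_convex_hull: "rayleigh_range M \<subseteq> convex hull (msupp M)"
proof
  fix x assume "x \<in> rayleigh_range M"
  then obtain q where "q \<noteq> 0" and x: "x = rayleigh M (poly q)"
    unfolding rayleigh_range_def by blast
  show "x \<in> convex hull (msupp M)"
  proof (rule ccontr)
    assume "x \<notin> convex hull (msupp M)"
    then obtain a b where ab: "inner a x < b" "\<forall>y\<in>convex hull (msupp M). b < inner a y"
      using separating_hyperplane_closed_point[OF convex_convex_hull]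
        compact_imp_closed[OF compact_convex_hull[OF compact_msupp]] by blast
    have "AE z in M. 0 \<le> (inner a z - b) * (cmod (poly q z))\<^sup>2"
      using AE_in_msupp by eventually_elim (use ab(2) hull_inc in force)
    then have "0 \<le> (\<integral>z. (inner a z - b) * (cmod (poly q z))\<^sup>2 \<partial>M)"
      by (rule integral_nonneg_AE)
    then have "0 \<le> inner a x - b"
      unfolding x using norm_poly_pos[OF \<open>q \<noteq> 0\<close>]
      by (subst inner_rayleigh_diff) (auto intro: continuous_intros)
    with ab(1) show False
      by simp
  qed
qed

lemma closed_segment_rayleigh_subset:
  assumes q1: "q1 \<noteq> 0" and q2: "q2 \<noteq> 0"
  shows "closed_segment (rayleigh M (poly q1)) (rayleigh M (poly q2)) \<subseteq> rayleigh_range M"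
proof (cases "rayleigh M (poly q1) = rayleigh M (poly q2)")
  case True
  then show ?thesis
    using q2 by (auto simp: rayleigh_range_def)
next
  case False
  have norm_ne: "l2ip M (poly q) (poly q) \<noteq> 0" if "q \<noteq> 0" for q
    using norm_poly_pos[OF that] by (simp add: l2ip_self)
  obtain \<omega> where \<omega>: "\<omega> * cnj \<omega> = 1" and line: "\<And>s. l2ip M (\<lambda>z. of_real (1 - s) * poly q1 z + (of_real s * \<omega>) * poly q2 z)
      (\<lambda>z. of_real (1 - s) * poly q1 z + (of_real s * \<omega>) * poly q2 z) \<noteq> 0 \<Longrightarrow>
      (rayleigh M (\<lambda>z. of_real (1 - s) * poly q1 z + (of_real s * \<omega>) * poly q2 z) - rayleigh M (poly q1)) /
      (rayleigh M (poly q2) - rayleigh M (poly q1)) \<in> \<real>"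
    by (rule rayleigh_pencil_on_line[of "poly q1" "poly q2"]) (auto intro: continuous_intros simp: q1 q2 False norm_ne)
  define qs where "qs s = smult (of_real (1 - s)) q1 + smult (of_real s * \<omega>) q2" for s
  have poly_qs: "poly (qs s) = (\<lambda>z. of_real (1 - s) * poly q1 z + (of_real s * \<omega>) * poly q2 z)" for s
    by (auto simp: qs_def)
  have "\<omega> \<noteq> 0"
    using \<omega> by auto
  have qs_nonzero: "qs s \<noteq> 0" if "s \<in> {0..1}" for s
  proof -
    have "of_real (1 - s) \<noteq> 0 \<or> of_real s * \<omega> \<noteq> 0"
      using \<open>\<omega> \<noteq> 0\<close>
      by (cases "s = 0") simp_all
    then show ?thesis
      unfolding qs_def by (rule smult_add_nonzero_if_rayleigh_ne[OF q1 q2 False])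
  qed
  define F where "F s = rayleigh M (poly (qs s))" for s
  have "continuous_on {0..1} F"
    unfolding F_def poly_qs using norm_ne[OF qs_nonzero]
    by (intro continuous_on_rayleigh_pencil continuous_intros) (auto simp: poly_qs)
  moreover have ends: "F 0 = rayleigh M (poly q1)" "F 1 = rayleigh M (poly q2)"
    using rayleigh_scale[OF \<open>\<omega> \<noteq> 0\<close>, of M "poly q2"] by (auto simp: F_def qs_def poly_smult[abs_def])
  moreover have "(F s - F 0) / (F 1 - F 0) \<in> \<real>" if "s \<in> {0..1}" for s
    using line[of s] norm_ne[OF qs_nonzero[OF that]] unfolding ends unfolding F_def poly_qs by simp
  ultimately have "closed_segment (F 0) (F 1) \<subseteq> F ` {0..1}"
    by (intro closed_segment_subset_path_image) auto
  moreover have "F ` {0..1} \<subseteq> rayleigh_range M"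
    using qs_nonzero by (auto simp: rayleigh_range_def F_def)
  ultimately show ?thesis
    using ends by simp
qed

lemma convex_rayleigh_range: "convex (rayleigh_range M)"
  unfolding convex_contains_segment rayleigh_range_def
  using closed_segment_rayleigh_subset by (auto simp: rayleigh_range_def)

lemma rayleigh_range_meets_halfplane:
  assumes z0: "z0 \<in> msupp M" and "inner a z0 < b"
  shows "\<exists>x\<in>rayleigh_range M. inner a x < b"
proof -
  obtain r U L and p :: "complex poly" where "0 < r" "0 < U" "U < L"
    and near: "\<And>z. z \<in> ball z0 r \<Longrightarrow> inner a z - b \<le> - ((b - inner a z0) / 2) \<and> L \<le> (cmod (poly p z))\<^sup>2"
    and far: "\<And>z. z \<in> msupp M \<Longrightarrow> 0 \<le> inner a z - b \<Longrightarrow> (cmod (poly p z))\<^sup>2 \<le> U"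
    using exists_linear_poly_peaking[OF \<open>inner a z0 < b\<close>] by metis
  define w where "w z = (cmod (poly p z))\<^sup>2" for z
  have "\<exists>N. (\<integral>z. (inner a z - b) * w z ^ N \<partial>M) < 0"
  proof (rule exists_power_weighted_integral_neg[OF _ _ z0 \<open>0 < r\<close> _ \<open>0 < U\<close> \<open>U < L\<close>,
        where c="(b - inner a z0) / 2"])
    show "continuous_on UNIV (\<lambda>z. inner a z - b)" "continuous_on UNIV w"
      unfolding w_def by (intro continuous_intros)+
    show "0 < (b - inner a z0) / 2"
      using \<open>inner a z0 < b\<close> by simp
    show "inner a z - b \<le> - ((b - inner a z0) / 2) \<and> L \<le> w z" if "z \<in> ball z0 r" for z
      using near[OF that] by (simp add: w_def)
    show "0 \<le> w z" for z
      by (simp add: w_def)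
    show "w z \<le> U" if "z \<in> msupp M" "0 \<le> inner a z - b" for z
      using far[OF that] by (simp add: w_def)
  qed
  then obtain N where N: "(\<integral>z. (inner a z - b) * w z ^ N \<partial>M) < 0"
    by blast
  define q where "q = p ^ N"
  have q: "(cmod (poly q z))\<^sup>2 = w z ^ N" for z
    by (simp add: q_def w_def norm_power power_mult[symmetric] mult.commute)
  have "q \<noteq> 0"
  proof
    assume "q = 0"
    then have "w z ^ N = 0" for z
      using q[of z] by simp
    with N show False
      by simp
  qed
  have "inner a (rayleigh M (poly q)) - b < 0"
    using N norm_poly_pos[OF \<open>q \<noteq> 0\<close>]
    by (subst inner_rayleigh_diff) (auto simp: q intro!: continuous_intros divide_neg_pos)
  moreover have "rayleigh M (poly q) \<in> rayleigh_range M"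
    using \<open>q \<noteq> 0\<close> by (auto simp: rayleigh_range_def)
  ultimately show ?thesis
    by force
qed

lemma convex_hull_subset_closure_rayleigh_range: "convex hull (msupp M) \<subseteq> closure (rayleigh_range M)"
proof
  fix y assume y: "y \<in> convex hull (msupp M)"
  show "y \<in> closure (rayleigh_range M)"
  proof (rule ccontr)
    assume "y \<notin> closure (rayleigh_range M)"
    then obtain a b where ab: "inner a y < b" "\<forall>x\<in>closure (rayleigh_range M). b < inner a x"
      using separating_hyperplane_closed_point[OF convex_closure[OF convex_rayleigh_range] closed_closure]
      by blast
    have "\<exists>z0\<in>msupp M. inner a z0 < b"
    proof (rule ccontr)
      assume "\<not> (\<exists>z0\<in>msupp M. inner a z0 < b)"
      then have "convex hull (msupp M) \<subseteq> {x. b \<le> inner a x}"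
        by (intro hull_minimal convex_halfspace_ge) (auto simp: not_less)
      with y ab(1) show False
        by auto
    qed
    then obtain x where "x \<in> rayleigh_range M" "inner a x < b"
      using rayleigh_range_meets_halfplane by blast
    moreover from \<open>x \<in> rayleigh_range M\<close> have "b < inner a x"
      using ab(2) closure_subset by blast
    ultimately show False
      by linarith
  qed
qed

end

theorem corollary4:
  fixes M :: "complex measure"
  assumes "sets M = sets borel"
    and "finite_measure M"
    and "compact (msupp M)"
    and "infinite (msupp M)"
  shows "convex hull (msupp M) = closure (hess_numrange M)
       \<and> closure (hess_numrange M) = closure (\<Union>n. section_numrange M n)"
proof -
  interpret infinitely_supported_measure M
    by (intro infinitely_supported_measure.intro compactly_supported_measure.intro
        infinitely_supported_measure_axioms.intro assms)
  have "hess_numrange M = rayleigh_range M"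
    using hess_numrange_subset_rayleigh_range rayleigh_range_subset_hess_numrange by (rule equalityI)
  moreover have "closure (rayleigh_range M) \<subseteq> convex hull (msupp M)"
    using rayleigh_range_subset_convex_hull compact_imp_closed[OF compact_convex_hull[OF compact_msupp]]
    by (rule closure_minimal)
  then have "convex hull (msupp M) = closure (rayleigh_range M)"
    using convex_hull_subset_closure_rayleigh_range by (rule equalityI[rotated])
  ultimately show ?thesis
    by (simp add: Union_section_numrange)
qed

end
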